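(* Let $\mathcal{G}\subseteq\mathcal{F}$ be a sub-$\sigma$-field and let $X\in L^\infty$ be independent of $\mathcal{G}$. Then $\mathbb{E}[X\mid\mathcal{G}]$ is exactly the set of random variables $Y\in L^\infty(\mathcal{G})$ that take values (a.s.) in the ball $\mathbb{E}[X]$.
   Context: $\mathbb{K}$ is a local field with non-archimedean absolute value $|\cdot|$ satisfying $|x|=0 \iff x=0$, $|xy|=|x||y|$, $|x+y|\le|x|\vee|y|$. $(\Omega,\mathcal{F},\mathbb{P})$ is a probability space; $L^\infty$ is the space of $\mathbb{K}$-valued random variables $X$ with $\|X\|_\infty:=\operatorname{ess\,sup}|X|<\infty$; $L^\infty(\mathcal{G})$ its $\mathcal{G}$-measurable subspace. Unconditional expectation: $\varepsilon(X):=\inf_{c\in\mathbb{K}}\|X-c\|_\infty$ and $\mathbb{E}[X]:=\{c\in\mathbb{K}:\|X-c\|_\infty=\varepsilon(X)\}$. For a non-negative real random variable $S$, $\operatorname{ess\,sup}\{S\mid\mathcal{G}\}:=\sup_{p\ge1}\mathbb{E}[S^p\mid\mathcal{G}]^{1/p}$ (usual real conditional expectation), $\|X\|_\mathcal{G}:=\operatorname{ess\,sup}\{|X|\mid\mathcal{G}\}$, and $\mathbb{E}[X\mid\mathcal{G}]:=\{Y\in L^\infty(\mathcal{G}): \|X-Y\|_\mathcal{G}\le\|X-Z\|_\mathcal{G}\text{ a.s. for all }Z\in L^\infty(\mathcal{G})\}$. *)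

theory Defs
  imports "HOL-Probability.Probability"
begin

text \<open>A non-archimedean absolute value on a field, making it a local field:
  non-trivial (non-discrete), and locally compact (the closed unit ball is
  sequentially compact for the metric induced by the absolute value; this also
  gives completeness).\<close>
definition nonarch_abs :: "('k::field \<Rightarrow> real) \<Rightarrow> bool" where
  "nonarch_abs av \<longleftrightarrow>
     (\<forall>x. av x \<ge> 0) \<and> (\<forall>x. av x = 0 \<longleftrightarrow> x = 0) \<and>
     (\<forall>x y. av (x * y) = av x * av y) \<and>
     (\<forall>x y. av (x + y) \<le> max (av x) (av y))"

definition local_field_abs :: "('k::field \<Rightarrow> real) \<Rightarrow> bool" where
  "local_field_abs av \<longleftrightarrow> nonarch_abs av \<and>
     (\<exists>x. av x \<noteq> 0 \<and> av x \<noteq> 1) \<and>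
     (\<forall>s::nat \<Rightarrow> 'k. (\<forall>n. av (s n) \<le> 1) \<longrightarrow>
        (\<exists>r l. strict_mono r \<and> av l \<le> 1 \<and> (\<lambda>n. av (s (r n) - l)) \<longlonglongrightarrow> 0))"

definition K_borel :: "('k::field \<Rightarrow> real) \<Rightarrow> 'k measure" where
  "K_borel av = sigma UNIV {{y. av (y - c) < r} | c r. True}"

text \<open>Essentially bounded K-valued random variables that are measurable w.r.t. N
  (N = M gives L^\<infinity>, N = G gives L^\<infinity>(G)); boundedness is almost sure w.r.t. M.\<close>
definition Linf :: "('k::field \<Rightarrow> real) \<Rightarrow> 'a measure \<Rightarrow> 'a measure \<Rightarrow> ('a \<Rightarrow> 'k) set" where
  "Linf av M N = {X. X \<in> N \<rightarrow>\<^sub>M K_borel av \<and> (\<exists>C. AE \<omega> in M. av (X \<omega>) \<le> C)}"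

definition norm_inf :: "('k::field \<Rightarrow> real) \<Rightarrow> 'a measure \<Rightarrow> ('a \<Rightarrow> 'k) \<Rightarrow> ereal" where
  "norm_inf av M X = esssup M (\<lambda>\<omega>. ereal (av (X \<omega>)))"

definition eps_uncond :: "('k::field \<Rightarrow> real) \<Rightarrow> 'a measure \<Rightarrow> ('a \<Rightarrow> 'k) \<Rightarrow> ereal" where
  "eps_uncond av M X = (INF c. norm_inf av M (\<lambda>\<omega>. X \<omega> - c))"

definition uncond_exp :: "('k::field \<Rightarrow> real) \<Rightarrow> 'a measure \<Rightarrow> ('a \<Rightarrow> 'k) \<Rightarrow> 'k set" where
  "uncond_exp av M X = {c. norm_inf av M (\<lambda>\<omega>. X \<omega> - c) = eps_uncond av M X}"

definition cond_esssup :: "'a measure \<Rightarrow> 'a measure \<Rightarrow> ('a \<Rightarrow> real) \<Rightarrow> 'a \<Rightarrow> ereal" where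
  "cond_esssup M G S = (\<lambda>\<omega>. SUP p\<in>{1::nat..}.
      ereal (real_cond_exp M G (\<lambda>x. S x ^ p) \<omega> powr (1 / real p)))"

definition cond_norm :: "('k::field \<Rightarrow> real) \<Rightarrow> 'a measure \<Rightarrow> 'a measure \<Rightarrow> ('a \<Rightarrow> 'k) \<Rightarrow> 'a \<Rightarrow> ereal" where
  "cond_norm av M G X = cond_esssup M G (\<lambda>\<omega>. av (X \<omega>))"

definition cond_exp_set :: "('k::field \<Rightarrow> real) \<Rightarrow> 'a measure \<Rightarrow> 'a measure \<Rightarrow> ('a \<Rightarrow> 'k) \<Rightarrow> ('a \<Rightarrow> 'k) set" where
  "cond_exp_set av M G X = {Y \<in> Linf av M G. \<forall>Z \<in> Linf av M G.
      AE \<omega> in M. cond_norm av M G (\<lambda>x. X x - Y x) \<omega> \<le> cond_norm av M G (\<lambda>x. X x - Z x) \<omega>}"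

definition indep_of :: "('k::field \<Rightarrow> real) \<Rightarrow> 'a measure \<Rightarrow> ('a \<Rightarrow> 'k) \<Rightarrow> 'a measure \<Rightarrow> bool" where
  "indep_of av M X G \<longleftrightarrow> (\<forall>A \<in> sets G. \<forall>B \<in> sets (K_borel av).
      measure M (A \<inter> (X -` B \<inter> space M)) = measure M A * measure M (X -` B \<inter> space M))"

end

theory Submission
  imports Defs
begin

text \<open>Because the absolute value is ultrametric, \<open>|X - Z| = |X - d|\<close> wherever
  \<open>|Z - d| < r \<le> |X - d|\<close>. If \<open>Z\<close> is \<open>\<G>\<close>-measurable and \<open>X\<close> is independent of \<open>\<G>\<close>,
  the event \<open>{|X - d| \<ge> r}\<close>, of probability \<open>q > 0\<close> when \<open>r < \<epsilon>(X)\<close>, is independent of the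
  \<open>\<G>\<close>-event \<open>{|Z - d| < r}\<close>, so there \<open>E[|X - Z|^p | \<G>]^(1/p) \<ge> r q^(1/p) \<rightarrow> r\<close>. Covering the
  separable field by countably many balls of radius \<open>r < \<epsilon>(X)\<close> yields
  \<open>\<parallel>X - Z\<parallel>\<^sub>\<G> \<ge> \<epsilon>(X)\<close> almost surely for every \<open>Z\<close>. Local compactness provides a best
  constant \<open>c\<close>, and \<open>E[X]\<close> is the closed ball of radius \<open>\<epsilon>(X)\<close> around \<open>c\<close>; any \<open>Y\<close> with
  values in it attains the bound \<open>\<parallel>X - Y\<parallel>\<^sub>\<G> \<le> \<epsilon>(X)\<close>. Conversely, where a minimiser \<open>Y\<close>
  has \<open>|Y - c| > \<epsilon>(X)\<close>, the ultrametric inequality gives \<open>|X - Y| = |Y - c|\<close>, a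
  \<open>\<G>\<close>-measurable quantity, so \<open>\<parallel>X - Y\<parallel>\<^sub>\<G> \<ge> |Y - c| > \<epsilon>(X) \<ge> \<parallel>X - c\<parallel>\<^sub>\<G>\<close> there.\<close>

locale nonarch_absval =
  fixes av :: "'k::field \<Rightarrow> real"
  assumes nonarch: "nonarch_abs av"
begin

lemma av_nonneg: "0 \<le> av x"
  using nonarch unfolding nonarch_abs_def by auto

lemma av_eq_0_iff [simp]: "av x = 0 \<longleftrightarrow> x = 0"
  using nonarch unfolding nonarch_abs_def by auto

lemma av_mult: "av (x * y) = av x * av y"
  using nonarch unfolding nonarch_abs_def by auto

lemma av_add_le_max: "av (x + y) \<le> max (av x) (av y)"
  using nonarch unfolding nonarch_abs_def by auto

lemma av_0 [simp]: "av 0 = 0"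
  by simp

lemma av_1 [simp]: "av 1 = 1"
proof -
  have "av 1 * av 1 = av 1 * 1"
    using av_mult[of 1 1] by simp
  then show ?thesis
    by (metis av_eq_0_iff mult_left_cancel one_neq_zero)
qed

lemma av_minus [simp]: "av (- x) = av x"
proof -
  have "(av (- 1) - 1) * (av (- 1) + 1) = 0"
    using av_mult[of "- 1" "- 1"] by (simp add: algebra_simps)
  moreover have "av (- 1) + 1 \<noteq> 0"
    using av_nonneg[of "- 1"] by simp
  ultimately have "av (- 1) = 1"
    by simp
  then show ?thesis
    using av_mult[of "- 1" x] by simp
qed

lemma av_minus_commute: "av (x - y) = av (y - x)"
  using av_minus[of "x - y"] by simp

lemma av_diff_le_max: "av (x - z) \<le> max (av (x - y)) (av (y - z))"
  using av_add_le_max[of "x - y" "y - z"] by simp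

lemma av_add_eq_of_less: "av a < av b \<Longrightarrow> av (a + b) = av b"
  using av_add_le_max[of a b] av_add_le_max[of "a + b" "- a"] by auto

lemma av_diff_eq_of_less: "av (y - d) < av (x - d) \<Longrightarrow> av (x - y) = av (x - d)"
  using av_add_eq_of_less[of "d - y" "x - d"] by (simp add: av_minus_commute[of y])

lemma av_power: "av (x ^ n) = av x ^ n"
  by (induction n) (simp_all add: av_mult)

lemma av_divide: "av (x / y) = av x / av y"
proof (cases "y = 0")
  case False
  then have "av y * av (x / y) = av x"
    using av_mult[of y "x / y"] by simp
  with False show ?thesis
    by (simp add: field_simps)
qed simp

end

locale local_field_absval =
  fixes av :: "'k::field \<Rightarrow> real"
  assumes local_field: "local_field_abs av"

sublocale local_field_absval \<subseteq> nonarch_absval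
  using local_field unfolding local_field_abs_def by unfold_locales blast

context local_field_absval
begin

lemma exists_av_gt_1: obtains p where "1 < av p"
proof -
  obtain x where x: "x \<noteq> 0" "av x \<noteq> 1"
    using local_field unfolding local_field_abs_def by auto
  then have pos: "0 < av x"
    using av_nonneg[of x] by (simp add: order_le_less)
  show ?thesis
  proof (cases "1 < av x")
    case False
    with x have "1 < av (1 / x)"
      using pos by (simp add: av_divide less_divide_eq_1_pos)
    with that show ?thesis .
  qed (rule that)
qed

lemma bounded_convergent_subseq:
  fixes s :: "nat \<Rightarrow> 'k"
  assumes bounded: "\<And>n. av (s n) \<le> R"
  obtains \<sigma> l where "strict_mono \<sigma>" "(\<lambda>n. av (s (\<sigma> n) - l)) \<longlonglongrightarrow> 0"
proof -
  obtain p where p: "1 < av p"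
    using exists_av_gt_1 by blast
  obtain N where N: "R < av p ^ N"
    using real_arch_pow[OF p] by blast
  define q where "q = p ^ N"
  have q: "R < av q" "0 < av q"
    using N p unfolding q_def av_power by simp_all
  have "av (s n / q) \<le> 1" for n
    using bounded[of n] q by (simp add: av_divide)
  then obtain \<sigma> l where \<sigma>: "strict_mono \<sigma>" and lim: "(\<lambda>n. av (s (\<sigma> n) / q - l)) \<longlonglongrightarrow> 0"
    using local_field[unfolded local_field_abs_def, THEN conjunct2, THEN conjunct2,
        rule_format, of "\<lambda>n. s n / q"]
    by blast
  have "q \<noteq> 0"
    using q(2) by auto
  then have "av (s (\<sigma> n) - q * l) = av q * av (s (\<sigma> n) / q - l)" for n
    by (simp add: av_mult[symmetric] right_diff_distrib)
  then have "(\<lambda>n. av (s (\<sigma> n) - q * l)) \<longlonglongrightarrow> 0"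
    using tendsto_mult_right_zero[OF lim, of "av q"] by simp
  with \<sigma> that show ?thesis
    by blast
qed

text \<open>A greedy choice of points that stay \<open>s\<close> apart from all earlier ones would give a
  sequence without convergent subsequence.\<close>
lemma ball_finite_cover:
  assumes s: "0 < s"
  shows "\<exists>F. finite F \<and> (\<forall>y. av y \<le> R \<longrightarrow> (\<exists>d\<in>F. av (y - d) < s))"
proof (rule ccontr)
  assume "\<not> ?thesis"
  then have far: "\<exists>y. av y \<le> R \<and> (\<forall>d\<in>F. s \<le> av (y - d))" if "finite F" for F
    using that by (auto simp: not_less)
  define pick where "pick F = (SOME y. av y \<le> R \<and> (\<forall>d\<in>F. s \<le> av (y - d)))" for F
  define pts where "pts = rec_nat {} (\<lambda>_ F. insert (pick F) F)"
  define y where "y n = pick (pts n)" for n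
  have pts_0: "pts 0 = {}" and pts_Suc: "pts (Suc n) = insert (y n) (pts n)" for n
    unfolding pts_def y_def by simp_all
  have fin: "finite (pts n)" for n
    by (induction n) (simp_all add: pts_0 pts_Suc)
  have y: "av (y n) \<le> R \<and> (\<forall>d\<in>pts n. s \<le> av (y n - d))" for n
    unfolding y_def pick_def by (rule someI_ex[OF far[OF fin]])
  have "m < n \<Longrightarrow> y m \<in> pts n" for m n
    by (induction n) (auto simp: pts_Suc less_Suc_eq)
  then have apart: "m < n \<Longrightarrow> s \<le> av (y n - y m)" for m n
    using y by blast
  obtain \<sigma> l where \<sigma>: "strict_mono \<sigma>" and lim: "(\<lambda>n. av (y (\<sigma> n) - l)) \<longlonglongrightarrow> 0"
    using bounded_convergent_subseq[of y R] y by blast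
  obtain N where N: "\<And>n. N \<le> n \<Longrightarrow> av (y (\<sigma> n) - l) < s"
    using order_tendstoD(2)[OF lim s] by (auto simp: eventually_sequentially)
  have "av (y (\<sigma> (Suc N)) - y (\<sigma> N)) \<le> max (av (y (\<sigma> (Suc N)) - l)) (av (l - y (\<sigma> N)))"
    by (rule av_diff_le_max)
  also have "\<dots> < s"
    using N[of N] N[of "Suc N"] by (simp add: av_minus_commute[of l])
  finally show False
    using apart[of "\<sigma> N" "\<sigma> (Suc N)"] \<sigma> by (simp add: strict_mono_def)
qed

lemma countable_dense:
  assumes "0 < s"
  obtains D where "countable D" "\<And>y. \<exists>d\<in>D. av (y - d) < s"
proof -
  have "\<forall>n::nat. \<exists>F. finite F \<and> (\<forall>y. av y \<le> real n \<longrightarrow> (\<exists>d\<in>F. av (y - d) < s))"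
    using ball_finite_cover[OF assms] by blast
  then obtain F where F: "\<And>n. finite (F n)" "\<And>n y. av y \<le> real n \<Longrightarrow> \<exists>d\<in>F n. av (y - d) < s"
    by (auto dest!: choice)
  show ?thesis
  proof (rule that)
    show "countable (\<Union>n. F n)"
      using F(1) by (simp add: countable_finite)
    show "\<exists>d\<in>\<Union>n. F n. av (y - d) < s" for y
      using F(2)[of y "nat \<lceil>av y\<rceil>"] real_nat_ceiling_ge by blast
  qed
qed

lemma space_K_borel [simp]: "space (K_borel av) = UNIV"
  unfolding K_borel_def by simp

lemma ball_in_K_borel: "{y. av (y - c) < r} \<in> sets (K_borel av)"
  unfolding K_borel_def by auto

lemma measurable_av_diff_const:
  assumes "f \<in> N \<rightarrow>\<^sub>M K_borel av"
  shows "(\<lambda>\<omega>. av (f \<omega> - c)) \<in> borel_measurable N"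
  unfolding borel_measurable_iff_less
proof
  fix a
  have "{\<omega> \<in> space N. av (f \<omega> - c) < a} = f -` {y. av (y - c) < a} \<inter> space N"
    by auto
  then show "{\<omega> \<in> space N. av (f \<omega> - c) < a} \<in> sets N"
    using measurable_sets[OF assms ball_in_K_borel] by simp
qed

text \<open>By the ultrametric inequality, two points are closer than \<open>a\<close> iff both lie within \<open>a\<close>
  of a common point of a countable dense set.\<close>
lemma measurable_av_diff:
  assumes f: "f \<in> N \<rightarrow>\<^sub>M K_borel av" and g: "g \<in> N \<rightarrow>\<^sub>M K_borel av"
  shows "(\<lambda>\<omega>. av (f \<omega> - g \<omega>)) \<in> borel_measurable N"
  unfolding borel_measurable_iff_less
proof
  fix a :: real
  show "{\<omega> \<in> space N. av (f \<omega> - g \<omega>) < a} \<in> sets N"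
  proof (cases "0 < a")
    case False
    then have "{\<omega> \<in> space N. av (f \<omega> - g \<omega>) < a} = {}"
      using av_nonneg by (auto simp: not_less intro: order.trans)
    then show ?thesis
      by (metis sets.empty_sets)
  next
    case True
    then obtain D where D: "countable D" "\<And>y. \<exists>d\<in>D. av (y - d) < a"
      using countable_dense by blast
    have "{\<omega> \<in> space N. av (f \<omega> - g \<omega>) < a} =
      (\<Union>d\<in>D. {\<omega> \<in> space N. av (f \<omega> - d) < a} \<inter> {\<omega> \<in> space N. av (g \<omega> - d) < a})"
    proof safe
      fix \<omega> assume \<omega>: "\<omega> \<in> space N" "av (f \<omega> - g \<omega>) < a"
      obtain d where d: "d \<in> D" "av (g \<omega> - d) < a"
        using D(2) by blast
      have "av (f \<omega> - d) \<le> max (av (f \<omega> - g \<omega>)) (av (g \<omega> - d))"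
        by (rule av_diff_le_max)
      with \<omega> d show "\<omega> \<in> (\<Union>d\<in>D. {\<omega> \<in> space N. av (f \<omega> - d) < a} \<inter> {\<omega> \<in> space N. av (g \<omega> - d) < a})"
        by (intro UN_I[of d]) auto
    next
      fix \<omega> d assume "av (f \<omega> - d) < a" "av (g \<omega> - d) < a"
      moreover have "av (f \<omega> - g \<omega>) \<le> max (av (f \<omega> - d)) (av (d - g \<omega>))"
        by (rule av_diff_le_max)
      ultimately show "av (f \<omega> - g \<omega>) < a"
        by (auto simp: av_minus_commute[of d])
    qed
    moreover have "{\<omega> \<in> space N. av (h \<omega> - d) < a} \<in> sets N"
      if "h \<in> N \<rightarrow>\<^sub>M K_borel av" for h d
      using measurable_av_diff_const[OF that] unfolding borel_measurable_iff_less by blast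
    ultimately show ?thesis
      using D(1) f g by (auto intro: sets.countable_UN'')
  qed
qed

end

lemma power_powr_inverse: "0 \<le> x \<Longrightarrow> 0 < n \<Longrightarrow> (x ^ n) powr (1 / real n) = x"
  by (simp add: powr_realpow'[symmetric] powr_powr)

lemma LIMSEQ_mult_powr_inverse: "0 < q \<Longrightarrow> (\<lambda>n. r * q powr inverse (real (Suc n))) \<longlonglongrightarrow> r"
  using tendsto_mult_left[OF tendsto_powr[OF tendsto_const LIMSEQ_inverse_real_of_nat], of q r]
  by simp

lemma AE_ereal_ge_of_less:
  fixes f :: "'a \<Rightarrow> ereal"
  assumes less: "\<And>r. 0 < r \<Longrightarrow> r < e \<Longrightarrow> AE \<omega> in M. ereal r \<le> f \<omega>"
    and nonneg: "\<And>\<omega>. 0 \<le> f \<omega>"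
  shows "AE \<omega> in M. ereal e \<le> f \<omega>"
proof (cases "0 < e")
  case False
  then show ?thesis
    by (intro AE_I2 order.trans[OF _ nonneg]) simp
next
  case True
  define r where "r n = e * (1 / 2) powr inverse (real (Suc n))" for n
  have "0 < r n" "r n < e" for n
    using True by (simp_all add: r_def powr01_less_one)
  then have "AE \<omega> in M. \<forall>n. ereal (r n) \<le> f \<omega>"
    using less by (simp add: AE_all_countable)
  moreover have "(\<lambda>n. ereal (r n)) \<longlonglongrightarrow> ereal e"
    unfolding r_def lim_ereal by (rule LIMSEQ_mult_powr_inverse) simp
  ultimately show ?thesis
    by (auto elim!: eventually_mono intro: LIMSEQ_le_const2)
qed

lemma cond_esssup_nonneg: "0 \<le> cond_esssup M G S \<omega>"
  unfolding cond_esssup_def by (rule SUP_upper2[of 1]) auto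

lemma cond_esssup_ge_root:
  "0 < p \<Longrightarrow> ereal (real_cond_exp M G (\<lambda>x. S x ^ p) \<omega> powr (1 / real p)) \<le> cond_esssup M G S \<omega>"
  unfolding cond_esssup_def by (rule SUP_upper) simp

locale prob_space_subalgebra = prob_space M + finite_measure_subalgebra M G
  for M G :: "'a measure"
begin

lemma sets_G_subset: "sets G \<subseteq> events"
  using subalg by (simp add: subalgebra_def)

lemma real_cond_exp_indicator_indep:
  assumes E: "E \<in> events" and indep: "\<And>A. A \<in> sets G \<Longrightarrow> prob (A \<inter> E) = prob A * prob E"
  shows "AE \<omega> in M. real_cond_exp M G (indicator E) \<omega> = prob E"
proof (rule real_cond_exp_charact)
  show "integrable M (indicator E :: 'a \<Rightarrow> real)"
    using E by (intro integrable_real_indicator) (simp_all add: less_top[symmetric])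
  fix A assume A: "A \<in> sets G"
  then have "A \<in> events"
    using sets_G_subset by blast
  with E show "(\<integral>\<omega>\<in>A. indicator E \<omega> \<partial>M) = (\<integral>\<omega>\<in>A. prob E \<partial>M)"
    using indep[OF A] by (simp add: set_lebesgue_integral_def indicator_inter_arith[symmetric])
qed auto

lemma cond_esssup_le_const:
  assumes S_int: "\<And>p. integrable M (\<lambda>\<omega>. S \<omega> ^ p)" and S_nonneg: "\<And>\<omega>. 0 \<le> S \<omega>"
    and S_le: "AE \<omega> in M. S \<omega> \<le> c"
  shows "AE \<omega> in M. cond_esssup M G S \<omega> \<le> ereal c"
proof -
  have "AE \<omega> in M. 0 \<le> c"
    using S_le by eventually_elim (rule order.trans[OF S_nonneg])
  then have c: "0 \<le> c"
    by simp
  have "AE \<omega> in M. \<forall>p. real_cond_exp M G (\<lambda>x. S x ^ p) \<omega> \<in> {0 .. c ^ p}"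
    unfolding AE_all_countable
  proof
    fix p
    have "AE \<omega> in M. 0 \<le> real_cond_exp M G (\<lambda>x. S x ^ p) \<omega>"
      using S_nonneg borel_measurable_integrable[OF S_int] by (intro real_cond_exp_pos) auto
    moreover have "AE \<omega> in M. real_cond_exp M G (\<lambda>x. S x ^ p) \<omega> \<le> c ^ p"
      using S_le by (intro real_cond_exp_le_c[OF S_int]) (auto elim: eventually_mono simp: power_mono S_nonneg)
    ultimately show "AE \<omega> in M. real_cond_exp M G (\<lambda>x. S x ^ p) \<omega> \<in> {0 .. c ^ p}"
      by eventually_elim simp
  qed
  then show ?thesis
  proof eventually_elim
    case (elim \<omega>)
    show ?case
      unfolding cond_esssup_def
    proof (rule SUP_least)
      fix p :: nat assume "p \<in> {1..}"
      then have "real_cond_exp M G (\<lambda>x. S x ^ p) \<omega> powr (1 / real p) \<le> (c ^ p) powr (1 / real p)"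
        using elim by (intro powr_mono2) auto
      also have "\<dots> = c"
        using c \<open>p \<in> {1..}\<close> by (simp add: power_powr_inverse)
      finally show "ereal (real_cond_exp M G (\<lambda>x. S x ^ p) \<omega> powr (1 / real p)) \<le> ereal c"
        by simp
    qed
  qed
qed

lemma cond_esssup_ge_measurable:
  assumes S_int: "integrable M S" and S_nonneg: "\<And>\<omega>. 0 \<le> S \<omega>"
    and g_int: "integrable M g" and g_G: "g \<in> borel_measurable G"
    and g_le: "AE \<omega> in M. g \<omega> \<le> S \<omega>"
  shows "AE \<omega> in M. ereal (g \<omega>) \<le> cond_esssup M G S \<omega>"
proof -
  have "AE \<omega> in M. real_cond_exp M G g \<omega> \<le> real_cond_exp M G S \<omega>"
    by (rule real_cond_exp_mono[OF g_le g_int S_int])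
  moreover have "AE \<omega> in M. real_cond_exp M G g \<omega> = g \<omega>"
    by (rule real_cond_exp_F_meas[OF g_int g_G])
  moreover have "AE \<omega> in M. 0 \<le> real_cond_exp M G S \<omega>"
    using S_nonneg borel_measurable_integrable[OF S_int] by (intro real_cond_exp_pos) auto
  ultimately show ?thesis
  proof eventually_elim
    case (elim \<omega>)
    then have "ereal (g \<omega>) \<le> ereal (real_cond_exp M G (\<lambda>x. S x ^ 1) \<omega> powr (1 / real (1::nat)))"
      by simp
    also have "\<dots> \<le> cond_esssup M G S \<omega>"
      by (rule cond_esssup_ge_root) simp
    finally show ?case .
  qed
qed

lemma real_cond_exp_ge_of_indep:
  assumes f_int: "integrable M f" and f_nonneg: "\<And>\<omega>. 0 \<le> f \<omega>"
    and A: "A \<in> sets G" and E: "E \<in> events"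
    and indep: "\<And>A. A \<in> sets G \<Longrightarrow> prob (A \<inter> E) = prob A * prob E"
    and c: "0 \<le> c" and f_ge: "\<And>\<omega>. \<omega> \<in> A \<Longrightarrow> \<omega> \<in> E \<Longrightarrow> c \<le> f \<omega>"
  shows "AE \<omega> in M. \<omega> \<in> A \<longrightarrow> c * prob E \<le> real_cond_exp M G f \<omega>"
proof -
  define g where "g \<omega> = indicator A \<omega> * (c * indicator E \<omega>)" for \<omega> :: 'a
  have E_int: "integrable M (indicator E :: 'a \<Rightarrow> real)"
    using E by (intro integrable_real_indicator) (simp_all add: less_top[symmetric])
  have g_int: "integrable M g"
    unfolding g_def using A sets_G_subset E c
    by (intro integrable_const_bound[where B = c]) (auto simp: indicator_def)
  have "AE \<omega> in M. real_cond_exp M G g \<omega> \<le> real_cond_exp M G f \<omega>"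
    using f_ge f_nonneg by (intro real_cond_exp_mono[OF _ g_int f_int] AE_I2) (auto simp: g_def indicator_def)
  moreover have "AE \<omega> in M. real_cond_exp M G g \<omega> = indicator A \<omega> * real_cond_exp M G (\<lambda>x. c * indicator E x) \<omega>"
    unfolding g_def using A E g_int[unfolded g_def] by (intro real_cond_exp_mult) auto
  moreover have "AE \<omega> in M. real_cond_exp M G (\<lambda>x. c * indicator E x) \<omega> = c * real_cond_exp M G (indicator E) \<omega>"
    by (rule real_cond_exp_cmult[OF E_int])
  moreover have "AE \<omega> in M. real_cond_exp M G (indicator E) \<omega> = prob E"
    by (rule real_cond_exp_indicator_indep[OF E indep])
  ultimately show ?thesis
    by eventually_elim (auto simp: indicator_def)
qed

text \<open>Conditioning \<open>S^p \<ge> r^p\<close> on \<open>A \<inter> E\<close> gives \<open>E[S^p | \<G>] \<ge> r^p P(E)\<close> on \<open>A\<close>,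
  and \<open>r P(E)^(1/p) \<rightarrow> r\<close>.\<close>
lemma cond_esssup_ge_of_indep:
  assumes S_int: "\<And>p. integrable M (\<lambda>\<omega>. S \<omega> ^ p)" and S_nonneg: "\<And>\<omega>. 0 \<le> S \<omega>"
    and A: "A \<in> sets G" and E: "E \<in> events"
    and indep: "\<And>A. A \<in> sets G \<Longrightarrow> prob (A \<inter> E) = prob A * prob E"
    and E_pos: "0 < prob E" and r: "0 \<le> r"
    and S_ge: "\<And>\<omega>. \<omega> \<in> A \<Longrightarrow> \<omega> \<in> E \<Longrightarrow> r \<le> S \<omega>"
  shows "AE \<omega> in M. \<omega> \<in> A \<longrightarrow> ereal r \<le> cond_esssup M G S \<omega>"
proof -
  have "AE \<omega> in M. \<forall>p. \<omega> \<in> A \<longrightarrow> r ^ p * prob E \<le> real_cond_exp M G (\<lambda>x. S x ^ p) \<omega>"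
    using S_nonneg r S_ge
    by (intro AE_all_countable[THEN iffD2] allI real_cond_exp_ge_of_indep[OF S_int _ A E indep])
       (simp_all add: power_mono)
  then show ?thesis
  proof eventually_elim
    case (elim \<omega>)
    show ?case
    proof
      assume "\<omega> \<in> A"
      have "ereal (r * prob E powr inverse (real (Suc n))) \<le> cond_esssup M G S \<omega>" for n
      proof -
        have "r * prob E powr inverse (real (Suc n))
            = (r ^ Suc n) powr (1 / real (Suc n)) * prob E powr (1 / real (Suc n))"
          using r by (simp only: power_powr_inverse zero_less_Suc of_nat_0_less_iff inverse_eq_divide)
        also have "\<dots> = (r ^ Suc n * prob E) powr (1 / real (Suc n))"
          using r by (intro powr_mult[symmetric])
        also have "\<dots> \<le> real_cond_exp M G (\<lambda>x. S x ^ Suc n) \<omega> powr (1 / real (Suc n))"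
          using elim \<open>\<omega> \<in> A\<close> r E_pos by (intro powr_mono2) (simp_all del: power_Suc)
        finally show ?thesis
          using cond_esssup_ge_root[of "Suc n" M G S \<omega>] by (meson ereal_less_eq(3) order.trans zero_less_Suc)
      qed
      then show "ereal r \<le> cond_esssup M G S \<omega>"
        using LIMSEQ_mult_powr_inverse[OF E_pos, of r]
        by (auto intro: LIMSEQ_le_const2 simp flip: lim_ereal)
    qed
  qed
qed

end

locale local_field_rv = local_field_absval av + prob_space M
  for av :: "'k::field \<Rightarrow> real" and M :: "'a measure" +
  fixes X :: "'a \<Rightarrow> 'k"
  assumes X_Linf: "X \<in> Linf av M M"
begin

lemma X_measurable: "X \<in> M \<rightarrow>\<^sub>M K_borel av"
  using X_Linf unfolding Linf_def by simp

lemma X_bounded: obtains C where "AE \<omega> in M. av (X \<omega>) \<le> C"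
  using X_Linf unfolding Linf_def by blast

abbreviation dev :: "'k \<Rightarrow> ereal" where
  "dev c \<equiv> norm_inf av M (\<lambda>\<omega>. X \<omega> - c)"

lemma AE_le_dev: "AE \<omega> in M. ereal (av (X \<omega> - c)) \<le> dev c"
  unfolding norm_inf_def by (rule esssup_AE)

lemma dev_le: "AE \<omega> in M. ereal (av (X \<omega> - c)) \<le> z \<Longrightarrow> dev c \<le> z"
  unfolding norm_inf_def using measurable_av_diff_const[OF X_measurable] by (intro esssup_I) auto

lemma dev_nonneg: "0 \<le> dev c"
proof -
  have "esssup M (\<lambda>_. 0) \<le> dev c"
    unfolding norm_inf_def by (rule esssup_mono) (auto simp: av_nonneg)
  then show ?thesis
    by (simp add: esssup_const emeasure_space_1)
qed

lemma dev_le_max: "dev c \<le> max (dev y) (ereal (av (y - c)))"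
proof (rule dev_le)
  show "AE \<omega> in M. ereal (av (X \<omega> - c)) \<le> max (dev y) (ereal (av (y - c)))"
    using AE_le_dev[of y]
  proof eventually_elim
    case (elim \<omega>)
    have "av (X \<omega> - c) \<le> max (av (X \<omega> - y)) (av (y - c))"
      by (rule av_diff_le_max)
    then have "ereal (av (X \<omega> - c)) \<le> max (ereal (av (X \<omega> - y))) (ereal (av (y - c)))"
      by (simp add: max_def split: if_splits)
    also have "\<dots> \<le> max (dev y) (ereal (av (y - c)))"
      using elim by (rule max.mono) simp
    finally show ?case .
  qed
qed

lemma eps_uncond_le_dev: "eps_uncond av M X \<le> dev c"
  unfolding eps_uncond_def by (rule INF_lower) simp

definition eps :: real where
  "eps = real_of_ereal (eps_uncond av M X)"

lemma eps_uncond_eq: "eps_uncond av M X = ereal eps"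
proof -
  obtain C where "AE \<omega> in M. av (X \<omega>) \<le> C"
    by (rule X_bounded)
  then have "dev 0 \<le> ereal C"
    by (intro dev_le) auto
  then have "eps_uncond av M X \<le> ereal C"
    by (rule order.trans[OF eps_uncond_le_dev])
  moreover have "0 \<le> eps_uncond av M X"
    unfolding eps_uncond_def by (rule INF_greatest) (rule dev_nonneg)
  ultimately show ?thesis
    unfolding eps_def by (cases "eps_uncond av M X") auto
qed

lemma eps_nonneg: "0 \<le> eps"
  unfolding eps_def eps_uncond_def by (simp add: INF_greatest dev_nonneg real_of_ereal_pos)

lemma dev_sublevel_bounded: obtains R where "\<And>y. dev y \<le> ereal t \<Longrightarrow> av y \<le> R"
proof -
  obtain C where C: "AE \<omega> in M. av (X \<omega>) \<le> C"
    by (rule X_bounded)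
  have "av y \<le> max C t" if y: "dev y \<le> ereal t" for y
  proof -
    have "AE \<omega> in M. av (X \<omega> - y) \<le> t \<and> av (X \<omega>) \<le> C"
      using AE_le_dev[of y] C by eventually_elim (use y in \<open>auto dest: order.trans\<close>)
    then obtain \<omega> where \<omega>: "av (X \<omega> - y) \<le> t" "av (X \<omega>) \<le> C"
      using eventually_happens'[OF ae_filter_bot] by blast
    have "av (0 - y) \<le> max (av (0 - X \<omega>)) (av (X \<omega> - y))"
      by (rule av_diff_le_max)
    with \<omega> show ?thesis
      by auto
  qed
  with that show ?thesis
    by blast
qed

lemma dev_le_of_approx:
  assumes approx: "\<And>\<epsilon>. 0 < \<epsilon> \<Longrightarrow> \<exists>y. dev y \<le> ereal (t + \<epsilon>) \<and> av (y - c) \<le> \<epsilon>"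
    and t: "0 \<le> t"
  shows "dev c \<le> ereal t"
proof (rule ereal_le_epsilon2)
  fix \<epsilon> :: real assume "0 < \<epsilon>"
  then obtain y where y: "dev y \<le> ereal (t + \<epsilon>)" "av (y - c) \<le> \<epsilon>"
    using approx by blast
  have "dev c \<le> max (dev y) (ereal (av (y - c)))"
    by (rule dev_le_max)
  also have "\<dots> \<le> ereal (t + \<epsilon>)"
    using y t by simp
  finally show "dev c \<le> ereal t + ereal \<epsilon>"
    by simp
qed

text \<open>A minimising sequence of constants is bounded, so by local compactness a
  subsequence converges; its limit is a minimiser.\<close>
lemma exists_dev_eq_eps: "\<exists>c. dev c = ereal eps"
proof -
  have "\<exists>y. dev y < ereal (eps + inverse (real (Suc n)))" for n
  proof -
    have "eps_uncond av M X < ereal (eps + inverse (real (Suc n)))"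
      using eps_uncond_eq by simp
    then show ?thesis
      unfolding eps_uncond_def INF_less_iff by blast
  qed
  then obtain ys where ys: "\<And>n. dev (ys n) \<le> ereal (eps + inverse (real (Suc n)))"
    by (metis less_imp_le)
  obtain R where R: "\<And>y. dev y \<le> ereal (eps + 1) \<Longrightarrow> av y \<le> R"
    using dev_sublevel_bounded[of "eps + 1"] by blast
  have "av (ys n) \<le> R" for n
    using ys[of n] by (intro R) (auto simp: inverse_le_1_iff intro: order.trans)
  then obtain \<sigma> c where \<sigma>: "strict_mono \<sigma>" and lim: "(\<lambda>n. av (ys (\<sigma> n) - c)) \<longlonglongrightarrow> 0"
    by (rule bounded_convergent_subseq)
  have "dev c \<le> ereal eps"
  proof (rule dev_le_of_approx[OF _ eps_nonneg])
    fix \<epsilon> :: real assume "0 < \<epsilon>"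
    moreover have "(\<lambda>n. inverse (real (Suc (\<sigma> n)))) \<longlonglongrightarrow> 0"
      using LIMSEQ_subseq_LIMSEQ[OF LIMSEQ_inverse_real_of_nat \<sigma>] by (simp add: comp_def)
    ultimately have "\<forall>\<^sub>F n in sequentially. inverse (real (Suc (\<sigma> n))) < \<epsilon> \<and> av (ys (\<sigma> n) - c) < \<epsilon>"
      using lim by (intro eventually_conj order_tendstoD(2))
    then obtain n where n: "inverse (real (Suc (\<sigma> n))) < \<epsilon>" "av (ys (\<sigma> n) - c) < \<epsilon>"
      by (auto simp: eventually_sequentially)
    have "dev (ys (\<sigma> n)) \<le> ereal (eps + \<epsilon>)"
      using ys[of "\<sigma> n"] n(1) by (auto intro: order.trans)
    with n(2) show "\<exists>y. dev y \<le> ereal (eps + \<epsilon>) \<and> av (y - c) \<le> \<epsilon>"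
      by (intro exI[of _ "ys (\<sigma> n)"]) simp
  qed
  moreover have "ereal eps \<le> dev c"
    using eps_uncond_le_dev[of c] by (simp add: eps_uncond_eq)
  ultimately show ?thesis
    by (intro exI[of _ c]) simp
qed

definition center :: 'k where
  "center = (SOME c. dev c = ereal eps)"

lemma dev_center: "dev center = ereal eps"
  unfolding center_def by (rule someI_ex[OF exists_dev_eq_eps])

lemma AE_av_X_center_le: "AE \<omega> in M. av (X \<omega> - center) \<le> eps"
  using AE_le_dev[of center] by (simp add: dev_center)

lemma mem_uncond_exp_iff: "y \<in> uncond_exp av M X \<longleftrightarrow> av (y - center) \<le> eps"
proof
  assume "y \<in> uncond_exp av M X"
  then have "AE \<omega> in M. av (X \<omega> - y) \<le> eps"
    using AE_le_dev[of y] by (simp add: uncond_exp_def eps_uncond_eq)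
  then have "AE \<omega> in M. av (X \<omega> - y) \<le> eps \<and> av (X \<omega> - center) \<le> eps"
    using AE_av_X_center_le by eventually_elim simp
  then obtain \<omega> where "av (X \<omega> - y) \<le> eps" "av (X \<omega> - center) \<le> eps"
    using eventually_happens'[OF ae_filter_bot] by blast
  moreover have "av (y - center) \<le> max (av (y - X \<omega>)) (av (X \<omega> - center))"
    by (rule av_diff_le_max)
  ultimately show "av (y - center) \<le> eps"
    by (simp add: av_minus_commute[of y])
next
  assume "av (y - center) \<le> eps"
  then have "dev y \<le> ereal eps"
    using dev_le_max[of y center] dev_center by (simp add: av_minus_commute[of center])
  with eps_uncond_le_dev[of y] show "y \<in> uncond_exp av M X"
    by (simp add: uncond_exp_def eps_uncond_eq)
qed

lemma prob_av_X_ge_pos: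
  assumes "r < eps"
  shows "0 < prob {\<omega> \<in> space M. r \<le> av (X \<omega> - d)}"
proof (rule ccontr)
  let ?E = "{\<omega> \<in> space M. r \<le> av (X \<omega> - d)}"
  have E: "?E \<in> events"
    using measurable_av_diff_const[OF X_measurable, of d] by measurable
  assume "\<not> 0 < prob ?E"
  then have "?E \<in> null_sets M"
    using E by (simp add: null_sets_def emeasure_eq_measure not_less measure_le_0_iff)
  then have "AE \<omega> in M. \<omega> \<notin> ?E"
    by (rule AE_not_in)
  then have "AE \<omega> in M. ereal (av (X \<omega> - d)) \<le> ereal r"
    using AE_space by eventually_elim auto
  then have "dev d \<le> ereal r"
    by (rule dev_le)
  with eps_uncond_le_dev[of d] have "ereal eps \<le> ereal r"
    unfolding eps_uncond_eq by (rule order.trans)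
  with assms show False
    by simp
qed

end

locale local_field_rv_indep = local_field_rv av M X + prob_space_subalgebra M G
  for av :: "'k::field \<Rightarrow> real" and M G :: "'a measure" and X :: "'a \<Rightarrow> 'k" +
  assumes indep: "indep_of av M X G"
begin

lemma space_G: "space G = space M"
  using subalg by (simp add: subalgebra_def)

lemma Linf_G_measurable: "Z \<in> Linf av M G \<Longrightarrow> Z \<in> G \<rightarrow>\<^sub>M K_borel av"
  unfolding Linf_def by simp

lemma integrable_av_X_diff_power:
  assumes Z: "Z \<in> Linf av M G"
  shows "integrable M (\<lambda>\<omega>. av (X \<omega> - Z \<omega>) ^ p)"
proof -
  obtain C where C: "AE \<omega> in M. av (X \<omega>) \<le> C"
    by (rule X_bounded)
  obtain CZ where CZ: "AE \<omega> in M. av (Z \<omega>) \<le> CZ"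
    using Z unfolding Linf_def by blast
  have "(\<lambda>\<omega>. av (X \<omega> - Z \<omega>)) \<in> borel_measurable M"
    using X_measurable measurable_from_subalg[OF subalg Linf_G_measurable[OF Z]]
    by (rule measurable_av_diff)
  moreover have "AE \<omega> in M. norm (av (X \<omega> - Z \<omega>) ^ p) \<le> max C CZ ^ p"
    using C CZ
  proof eventually_elim
    case (elim \<omega>)
    have "av (X \<omega> - Z \<omega>) \<le> max (av (X \<omega> - 0)) (av (0 - Z \<omega>))"
      by (rule av_diff_le_max)
    with elim have "av (X \<omega> - Z \<omega>) \<le> max C CZ"
      by auto
    then show ?case
      by (simp add: av_nonneg power_mono)
  qed
  ultimately show ?thesis
    by (intro integrable_const_bound) auto
qed

lemma const_in_Linf: "(\<lambda>_. c) \<in> Linf av M G"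
  unfolding Linf_def by auto

lemma cond_norm_le_eps:
  assumes "Z \<in> Linf av M G" and "AE \<omega> in M. av (X \<omega> - Z \<omega>) \<le> eps"
  shows "AE \<omega> in M. cond_norm av M G (\<lambda>\<omega>. X \<omega> - Z \<omega>) \<omega> \<le> ereal eps"
  unfolding cond_norm_def
  using integrable_av_X_diff_power[OF assms(1)] av_nonneg assms(2) by (rule cond_esssup_le_const)

text \<open>On the \<open>\<G>\<close>-event \<open>{|Z - d| < r}\<close> the event \<open>{|X - d| \<ge> r}\<close>, independent of \<open>\<G>\<close>
  and of positive probability, forces \<open>|X - Z| = |X - d| \<ge> r\<close>.\<close>
lemma cond_norm_ge_on_ball:
  assumes Z: "Z \<in> Linf av M G" and r: "0 \<le> r" "r < eps"
  shows "AE \<omega> in M. av (Z \<omega> - d) < r \<longrightarrow> ereal r \<le> cond_norm av M G (\<lambda>\<omega>. X \<omega> - Z \<omega>) \<omega>"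
proof -
  define B where "B = {y. r \<le> av (y - d)}"
  define E where "E = X -` B \<inter> space M"
  have "B = space (K_borel av) - {y. av (y - d) < r}"
    unfolding B_def by auto
  then have B: "B \<in> sets (K_borel av)"
    using sets.compl_sets[OF ball_in_K_borel] by simp
  have "AE \<omega> in M. \<omega> \<in> {\<omega> \<in> space M. av (Z \<omega> - d) < r} \<longrightarrow>
      ereal r \<le> cond_esssup M G (\<lambda>\<omega>. av (X \<omega> - Z \<omega>)) \<omega>"
  proof (rule cond_esssup_ge_of_indep[OF integrable_av_X_diff_power[OF Z] av_nonneg, where E = E])
    show "{\<omega> \<in> space M. av (Z \<omega> - d) < r} \<in> sets G"
      using measurable_av_diff_const[OF Linf_G_measurable[OF Z], of d]
      unfolding borel_measurable_iff_less space_G by blast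
    show "E \<in> events"
      unfolding E_def using X_measurable B by (rule measurable_sets)
    show "prob (A \<inter> E) = prob A * prob E" if "A \<in> sets G" for A
      using indep that B unfolding indep_of_def E_def by blast
    have "E = {\<omega> \<in> space M. r \<le> av (X \<omega> - d)}"
      unfolding E_def B_def by auto
    then show "0 < prob E"
      using prob_av_X_ge_pos[OF r(2)] by simp
    show "r \<le> av (X \<omega> - Z \<omega>)" if "\<omega> \<in> {\<omega> \<in> space M. av (Z \<omega> - d) < r}" "\<omega> \<in> E" for \<omega>
      using that av_diff_eq_of_less[of "Z \<omega>" d "X \<omega>"] unfolding E_def B_def by auto
  qed (rule r(1))
  with AE_space show ?thesis
    by eventually_elim (simp add: cond_norm_def)
qed

lemma eps_le_cond_norm:
  assumes Z: "Z \<in> Linf av M G"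
  shows "AE \<omega> in M. ereal eps \<le> cond_norm av M G (\<lambda>\<omega>. X \<omega> - Z \<omega>) \<omega>"
proof (rule AE_ereal_ge_of_less)
  fix r assume r: "0 < r" "r < eps"
  obtain D where D: "countable D" "\<And>y. \<exists>d\<in>D. av (y - d) < r"
    using countable_dense[OF r(1)] by blast
  have "AE \<omega> in M. \<forall>d\<in>D. av (Z \<omega> - d) < r \<longrightarrow> ereal r \<le> cond_norm av M G (\<lambda>\<omega>. X \<omega> - Z \<omega>) \<omega>"
    using Z r by (intro AE_ball_countable[OF D(1), THEN iffD2] ballI cond_norm_ge_on_ball) auto
  then show "AE \<omega> in M. ereal r \<le> cond_norm av M G (\<lambda>\<omega>. X \<omega> - Z \<omega>) \<omega>"
    by eventually_elim (use D(2) in blast)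
qed (simp add: cond_norm_def cond_esssup_nonneg)

text \<open>Where \<open>|Y - c| > \<epsilon>(X) \<ge> |X - c|\<close>, the ultrametric inequality gives \<open>|X - Y| = |Y - c|\<close>.\<close>
lemma av_center_le_cond_norm:
  assumes Y: "Y \<in> Linf av M G"
  shows "AE \<omega> in M. eps < av (Y \<omega> - center) \<longrightarrow>
    ereal (av (Y \<omega> - center)) \<le> cond_norm av M G (\<lambda>\<omega>. X \<omega> - Y \<omega>) \<omega>"
proof -
  define g where "g \<omega> = (if eps < av (Y \<omega> - center) then av (Y \<omega> - center) else 0)" for \<omega>
  have [measurable]: "(\<lambda>\<omega>. av (Y \<omega> - center)) \<in> borel_measurable G"
    using measurable_av_diff_const[OF Linf_G_measurable[OF Y]] .
  have g_G: "g \<in> borel_measurable G"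
    unfolding g_def by measurable
  obtain CY where CY: "AE \<omega> in M. av (Y \<omega>) \<le> CY"
    using Y unfolding Linf_def by blast
  have "integrable M g"
  proof (rule integrable_const_bound[where B = "max CY (av center)"])
    show "AE \<omega> in M. norm (g \<omega>) \<le> max CY (av center)"
      using CY
    proof eventually_elim
      case (elim \<omega>)
      have "av (Y \<omega> - center) \<le> max (av (Y \<omega> - 0)) (av (0 - center))"
        by (rule av_diff_le_max)
      with elim eps_nonneg show ?case
        by (auto simp: g_def av_nonneg le_max_iff_disj)
    qed
    show "g \<in> borel_measurable M"
      by (rule measurable_from_subalg[OF subalg g_G])
  qed
  moreover have "AE \<omega> in M. g \<omega> \<le> av (X \<omega> - Y \<omega>)"
    using AE_av_X_center_le
  proof eventually_elim
    case (elim \<omega>)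
    then have "eps < av (Y \<omega> - center) \<Longrightarrow> av (Y \<omega> - X \<omega>) = av (Y \<omega> - center)"
      by (intro av_diff_eq_of_less) simp
    then show ?case
      by (simp add: g_def av_nonneg av_minus_commute[of "Y \<omega>"])
  qed
  ultimately have "AE \<omega> in M. ereal (g \<omega>) \<le> cond_esssup M G (\<lambda>\<omega>. av (X \<omega> - Y \<omega>)) \<omega>"
    using integrable_av_X_diff_power[OF Y, of 1] g_G
    by (intro cond_esssup_ge_measurable) (simp_all add: av_nonneg)
  then show ?thesis
    by eventually_elim (auto simp: g_def cond_norm_def split: if_splits)
qed

lemma cond_exp_set_eq:
  "cond_exp_set av M G X = {Y \<in> Linf av M G. AE \<omega> in M. Y \<omega> \<in> uncond_exp av M X}"
proof (intro set_eqI iffI)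
  fix Y assume Y_min: "Y \<in> cond_exp_set av M G X"
  then have Y: "Y \<in> Linf av M G"
    unfolding cond_exp_set_def by simp
  have "\<forall>Z\<in>Linf av M G. AE \<omega> in M.
      cond_norm av M G (\<lambda>\<omega>. X \<omega> - Y \<omega>) \<omega> \<le> cond_norm av M G (\<lambda>\<omega>. X \<omega> - Z \<omega>) \<omega>"
    using Y_min unfolding cond_exp_set_def by blast
  from this[rule_format, OF const_in_Linf[of center]]
  have "AE \<omega> in M. cond_norm av M G (\<lambda>\<omega>. X \<omega> - Y \<omega>) \<omega> \<le> cond_norm av M G (\<lambda>\<omega>. X \<omega> - center) \<omega>" .
  moreover have "AE \<omega> in M. cond_norm av M G (\<lambda>\<omega>. X \<omega> - center) \<omega> \<le> ereal eps"
    using const_in_Linf AE_av_X_center_le by (rule cond_norm_le_eps)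
  moreover note av_center_le_cond_norm[OF Y]
  ultimately have "AE \<omega> in M. Y \<omega> \<in> uncond_exp av M X"
    by eventually_elim (auto simp: mem_uncond_exp_iff not_le dest: order.trans)
  with Y show "Y \<in> {Y \<in> Linf av M G. AE \<omega> in M. Y \<omega> \<in> uncond_exp av M X}"
    by simp
next
  fix Y assume "Y \<in> {Y \<in> Linf av M G. AE \<omega> in M. Y \<omega> \<in> uncond_exp av M X}"
  then have Y: "Y \<in> Linf av M G" and Y_vals: "AE \<omega> in M. Y \<omega> \<in> uncond_exp av M X"
    by auto
  from Y_vals AE_av_X_center_le have "AE \<omega> in M. av (X \<omega> - Y \<omega>) \<le> eps"
  proof eventually_elim
    case (elim \<omega>)
    have "av (X \<omega> - Y \<omega>) \<le> max (av (X \<omega> - center)) (av (center - Y \<omega>))"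
      by (rule av_diff_le_max)
    with elim show ?case
      by (simp add: mem_uncond_exp_iff av_minus_commute[of center])
  qed
  then have "AE \<omega> in M. cond_norm av M G (\<lambda>\<omega>. X \<omega> - Y \<omega>) \<omega> \<le> ereal eps"
    by (rule cond_norm_le_eps[OF Y])
  then have "AE \<omega> in M. cond_norm av M G (\<lambda>\<omega>. X \<omega> - Y \<omega>) \<omega> \<le> cond_norm av M G (\<lambda>\<omega>. X \<omega> - Z \<omega>) \<omega>"
    if "Z \<in> Linf av M G" for Z
    using eps_le_cond_norm[OF that] by eventually_elim (rule order.trans)
  with Y show "Y \<in> cond_exp_set av M G X"
    unfolding cond_exp_set_def by blast
qed

end

theorem mainTheorem11:
  fixes av :: "'k::field \<Rightarrow> real" and M G :: "'a measure" and X :: "'a \<Rightarrow> 'k"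
  assumes "local_field_abs av"
    and "prob_space M"
    and "subalgebra M G"
    and "X \<in> Linf av M M"
    and "indep_of av M X G"
  shows "cond_exp_set av M G X = {Y \<in> Linf av M G. AE \<omega> in M. Y \<omega> \<in> uncond_exp av M X}"
proof -
  interpret prob_space M
    by fact
  interpret local_field_rv_indep av M G X
    using assms by unfold_locales auto
  show ?thesis
    by (rule cond_exp_set_eq)
qed

end
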